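(* Let $G$ be a multigraph with $V(G)=S\cup\mathcal{T}$, $S\cap\mathcal{T}=\emptyset$, where every terminal in $\mathcal{T}$ has degree exactly one and is adjacent to a vertex of $S$, $G[S]$ is connected, and $k=|\partial(S)|=|\mathcal{T}|\ge 3$. Then $S$ can be partitioned into at most $k-2$ sets, each of which is connectivity-$2$ linked in $G$.
   Context: For disjoint vertex sets $A,B$, $E_G(A,B)$ is the set of edges with one endpoint in $A$ and the other in $B$; for $Y\subseteq V(G)$, $\partial(Y)=E_G(Y,V(G)\setminus Y)$. A set $X\subseteq S$ is connectivity-$c$ linked in $G$ if for every pair of disjoint sets $A,B$ with $A\cup B=X$ we have $|E_G(A,B)|\ge \min\big(|\partial(A)\cap\partial(X)|,\ |\partial(B)\cap\partial(X)|,\ c\big)$. *)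

theory Defs
  imports Main "HOL-Library.Disjoint_Sets"
begin

text \<open>A finite multigraph: vertex set V, edge set E (edge identities of type 'e),
  and an endpoint map ends giving each edge an (unordered, represented as a pair) pair
  of endpoints. Parallel edges are distinct elements of E; loops (fst = snd) are allowed.\<close>

definition multigraph :: "'a set \<Rightarrow> 'e set \<Rightarrow> ('e \<Rightarrow> 'a \<times> 'a) \<Rightarrow> bool" where
  "multigraph V E ends \<longleftrightarrow> finite V \<and> finite E \<and> (\<forall>e\<in>E. fst (ends e) \<in> V \<and> snd (ends e) \<in> V)"

definition edges_between :: "'e set \<Rightarrow> ('e \<Rightarrow> 'a \<times> 'a) \<Rightarrow> 'a set \<Rightarrow> 'a set \<Rightarrow> 'e set" where
  "edges_between E ends A B = {e\<in>E. (fst (ends e) \<in> A \<and> snd (ends e) \<in> B) \<or> (fst (ends e) \<in> B \<and> snd (ends e) \<in> A)}"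

definition bdry :: "'a set \<Rightarrow> 'e set \<Rightarrow> ('e \<Rightarrow> 'a \<times> 'a) \<Rightarrow> 'a set \<Rightarrow> 'e set" where
  "bdry V E ends Y = edges_between E ends Y (V - Y)"

text \<open>Degree: number of incident edge-ends (a loop counts twice).\<close>
definition degree :: "'e set \<Rightarrow> ('e \<Rightarrow> 'a \<times> 'a) \<Rightarrow> 'a \<Rightarrow> nat" where
  "degree E ends v = card {e\<in>E. fst (ends e) = v} + card {e\<in>E. snd (ends e) = v}"

definition adjacent :: "'e set \<Rightarrow> ('e \<Rightarrow> 'a \<times> 'a) \<Rightarrow> 'a \<Rightarrow> 'a \<Rightarrow> bool" where
  "adjacent E ends u v \<longleftrightarrow> (\<exists>e\<in>E. ends e = (u, v) \<or> ends e = (v, u))"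

definition induced_connected :: "'e set \<Rightarrow> ('e \<Rightarrow> 'a \<times> 'a) \<Rightarrow> 'a set \<Rightarrow> bool" where
  "induced_connected E ends S \<longleftrightarrow> S \<noteq> {} \<and>
     (\<forall>u\<in>S. \<forall>v\<in>S. (u, v) \<in> {(x, y). x \<in> S \<and> y \<in> S \<and> adjacent E ends x y}\<^sup>*)"

definition conn_linked :: "'a set \<Rightarrow> 'e set \<Rightarrow> ('e \<Rightarrow> 'a \<times> 'a) \<Rightarrow> nat \<Rightarrow> 'a set \<Rightarrow> bool" where
  "conn_linked V E ends c X \<longleftrightarrow>
     (\<forall>A B. A \<inter> B = {} \<and> A \<union> B = X \<longrightarrow>
        card (edges_between E ends A B) \<ge>
          min (card (bdry V E ends A \<inter> bdry V E ends X))
              (min (card (bdry V E ends B \<inter> bdry V E ends X)) c))"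

end

theory Submission
  imports Defs
begin

text \<open>Induct on |S|. If S is connectivity-2 linked, the partition {S} works. Otherwise, since
  G[S] is connected, some bipartition (A, B) of S is crossed by a single edge, and A and B each
  carry at least two edges of \<partial>(S). Then |\<partial>(A)| = a + 1 and |\<partial>(B)| = b + 1 with a + b = |\<partial>(S)|
  and a, b \<ge> 2, so both sides are again connected with at least three boundary edges, and the
  partitions obtained for them have together at most (a - 1) + (b - 1) = |\<partial>(S)| - 2 parts.\<close>

definition cut_connected :: "'e set \<Rightarrow> ('e \<Rightarrow> 'a \<times> 'a) \<Rightarrow> 'a set \<Rightarrow> bool" where
  "cut_connected E ends S \<longleftrightarrow>
     (\<forall>A B. A \<inter> B = {} \<and> A \<union> B = S \<and> A \<noteq> {} \<and> B \<noteq> {} \<longrightarrow> edges_between E ends A B \<noteq> {})"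

lemma cut_connectedD:
  "\<lbrakk>cut_connected E ends S; A \<inter> B = {}; A \<union> B = S; A \<noteq> {}; B \<noteq> {}\<rbrakk>
     \<Longrightarrow> edges_between E ends A B \<noteq> {}"
  unfolding cut_connected_def by blast

lemma partition_on_Un:
  assumes "partition_on A P" "partition_on B Q" "A \<inter> B = {}"
  shows "partition_on (A \<union> B) (P \<union> Q)"
  using assms disjoint_union[of P Q] by (auto simp: partition_on_def)

lemma edges_between_sym: "edges_between E ends A B = edges_between E ends B A"
  unfolding edges_between_def by auto

lemma edges_between_Un_right:
  "edges_between E ends A (B \<union> C) = edges_between E ends A B \<union> edges_between E ends A C"
  unfolding edges_between_def by auto

lemma edges_between_mono_left: "A \<subseteq> A' \<Longrightarrow> edges_between E ends A B \<subseteq> edges_between E ends A' B"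
  unfolding edges_between_def by auto

lemma finite_edges_between: "finite E \<Longrightarrow> finite (edges_between E ends A B)"
  unfolding edges_between_def by auto

lemma finite_bdry: "finite E \<Longrightarrow> finite (bdry V E ends A)"
  unfolding bdry_def by (rule finite_edges_between)

lemma induced_connected_imp_cut_connected:
  assumes "induced_connected E ends S"
  shows "cut_connected E ends S"
  unfolding cut_connected_def
proof (intro allI impI)
  fix A B assume AB: "A \<inter> B = {} \<and> A \<union> B = S \<and> A \<noteq> {} \<and> B \<noteq> {}"
  then obtain u v where "u \<in> A" "v \<in> B" by blast
  let ?R = "{(x, y). x \<in> S \<and> y \<in> S \<and> adjacent E ends x y}"
  have "(u, v) \<in> ?R\<^sup>*" using assms \<open>u \<in> A\<close> \<open>v \<in> B\<close> AB unfolding induced_connected_def by blast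
  have leaves_A: "\<exists>x y. (x, y) \<in> ?R \<and> x \<in> A \<and> y \<notin> A"
    if "(a, b) \<in> ?R\<^sup>*" "a \<in> A" "b \<notin> A" for a b
    using that by (induction rule: rtrancl_induct) blast+
  obtain x y where "(x, y) \<in> ?R" "x \<in> A" "y \<notin> A"
    using leaves_A[OF \<open>(u, v) \<in> ?R\<^sup>*\<close> \<open>u \<in> A\<close>] \<open>v \<in> B\<close> AB by blast
  moreover from this have "y \<in> B" using AB by blast
  ultimately show "edges_between E ends A B \<noteq> {}"
    unfolding adjacent_def edges_between_def by force
qed

lemma card_bdry_part:
  assumes "finite E" "S \<subseteq> V" "A \<inter> B = {}" "A \<union> B = S"
  shows "card (bdry V E ends A) = card (edges_between E ends A B) + card (bdry V E ends A \<inter> bdry V E ends S)"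
proof -
  have "bdry V E ends A = edges_between E ends A B \<union> (bdry V E ends A \<inter> bdry V E ends S)"
    and "edges_between E ends A B \<inter> (bdry V E ends A \<inter> bdry V E ends S) = {}"
    using assms(2-4) unfolding bdry_def edges_between_def by auto
  then show ?thesis
    using assms(1) by (metis card_Un_disjoint finite_bdry finite_edges_between finite_Int)
qed

lemma card_bdry_split:
  assumes "finite E" "S \<subseteq> V" "A \<inter> B = {}" "A \<union> B = S"
  shows "card (bdry V E ends S) = card (bdry V E ends A \<inter> bdry V E ends S) + card (bdry V E ends B \<inter> bdry V E ends S)"
proof -
  have "bdry V E ends S = (bdry V E ends A \<inter> bdry V E ends S) \<union> (bdry V E ends B \<inter> bdry V E ends S)"
    and "(bdry V E ends A \<inter> bdry V E ends S) \<inter> (bdry V E ends B \<inter> bdry V E ends S) = {}"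
    using assms(2-4) unfolding bdry_def edges_between_def by auto
  then show ?thesis
    using assms(1) by (metis card_Un_disjoint finite_bdry finite_Int)
qed

lemma not_conn_linked_2_bridge:
  assumes "finite E" "cut_connected E ends S" "\<not> conn_linked V E ends 2 S"
  obtains A B e where "A \<inter> B = {}" "A \<union> B = S" "A \<noteq> {}" "B \<noteq> {}" "edges_between E ends A B = {e}"
    "card (bdry V E ends A \<inter> bdry V E ends S) \<ge> 2" "card (bdry V E ends B \<inter> bdry V E ends S) \<ge> 2"
proof -
  obtain A B where AB: "A \<inter> B = {}" "A \<union> B = S"
    and few: "card (edges_between E ends A B) < min (card (bdry V E ends A \<inter> bdry V E ends S))
                (min (card (bdry V E ends B \<inter> bdry V E ends S)) 2)"
    using assms(3) unfolding conn_linked_def by (auto simp: not_le)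
  have "A \<noteq> {}" "B \<noteq> {}" using few unfolding bdry_def edges_between_def by auto
  then have "edges_between E ends A B \<noteq> {}" using cut_connectedD[OF assms(2) AB] by blast
  then have "card (edges_between E ends A B) > 0"
    using finite_edges_between[OF assms(1)] by (simp add: card_gt_0_iff)
  with few have "card (edges_between E ends A B) = 1" by linarith
  then obtain e where "edges_between E ends A B = {e}" by (rule card_1_singletonE)
  with that AB \<open>A \<noteq> {}\<close> \<open>B \<noteq> {}\<close> few show thesis by auto
qed

lemma cut_connected_bridge_side:
  assumes "cut_connected E ends S" "A \<inter> B = {}" "A \<union> B = S" "B \<noteq> {}"
    and bridge: "edges_between E ends A B = {e}"
  shows "cut_connected E ends A"
  unfolding cut_connected_def
proof (intro allI impI notI)
  fix A1 A2 assume A12: "A1 \<inter> A2 = {} \<and> A1 \<union> A2 = A \<and> A1 \<noteq> {} \<and> A2 \<noteq> {}"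
    and no_edge: "edges_between E ends A1 A2 = {}"
  \<comment> \<open>Each of A1, A2 is separated from the rest of S only by edges to B, i.e. by the bridge e,
    which cannot have an endpoint in both.\<close>
  have bridge_in: "e \<in> edges_between E ends A' B" if "A' \<union> A'' = A" "A' \<inter> A'' = {}" "A' \<noteq> {}"
    "edges_between E ends A' A'' = {}" for A' A''
  proof -
    have "edges_between E ends A' (A'' \<union> B) \<noteq> {}"
      using cut_connectedD[OF assms(1), of A' "A'' \<union> B"] that assms(2-4) by auto
    moreover have "edges_between E ends A' B \<subseteq> {e}"
      using bridge edges_between_mono_left[of A' A E ends B] that(1) by auto
    ultimately show ?thesis using that(4) by (auto simp: edges_between_Un_right)
  qed
  have "e \<in> edges_between E ends A1 B" "e \<in> edges_between E ends A2 B"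
    using bridge_in[of A1 A2] bridge_in[of A2 A1] A12 no_edge edges_between_sym[of E ends A1 A2]
    by auto
  then show False using A12 assms(2) unfolding edges_between_def by auto
qed

lemma cut_connected_partition_conn_linked_2:
  assumes "finite E" "finite S" "S \<subseteq> V" "cut_connected E ends S" "card (bdry V E ends S) \<ge> 3"
  shows "\<exists>P. partition_on S P \<and> card P \<le> card (bdry V E ends S) - 2 \<and> (\<forall>X\<in>P. conn_linked V E ends 2 X)"
  using assms(2-5)
proof (induction "card S" arbitrary: S rule: less_induct)
  case less
  show ?case
  proof (cases "conn_linked V E ends 2 S")
    case True
    have "S \<noteq> {}" using less.prems(4) unfolding bdry_def edges_between_def by auto
    with True less.prems(4) show ?thesis
      by (intro exI[of _ "{S}"]) (auto simp: partition_on_space)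
  next
    case False
    then obtain A B e where AB: "A \<inter> B = {}" "A \<union> B = S" "A \<noteq> {}" "B \<noteq> {}"
      and bridge: "edges_between E ends A B = {e}"
      and a: "card (bdry V E ends A \<inter> bdry V E ends S) \<ge> 2"
      and b: "card (bdry V E ends B \<inter> bdry V E ends S) \<ge> 2"
      using not_conn_linked_2_bridge[OF assms(1) less.prems(3)] by metis
    have BA: "B \<inter> A = {}" "B \<union> A = S" and bridge': "edges_between E ends B A = {e}"
      using AB bridge edges_between_sym[of E ends B A] by auto
    have card_A: "card (bdry V E ends A) = 1 + card (bdry V E ends A \<inter> bdry V E ends S)"
      using card_bdry_part[OF assms(1) less.prems(2) AB(1,2)] bridge by simp
    have card_B: "card (bdry V E ends B) = 1 + card (bdry V E ends B \<inter> bdry V E ends S)"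
      using card_bdry_part[OF assms(1) less.prems(2) BA] bridge' by simp
    have "card A < card S" "card B < card S" "finite A" "finite B" "A \<subseteq> V" "B \<subseteq> V"
      using AB less.prems(1,2) by (auto intro!: psubset_card_mono)
    moreover have "cut_connected E ends A" "cut_connected E ends B"
      using cut_connected_bridge_side[OF less.prems(3) AB(1,2,4) bridge]
        cut_connected_bridge_side[OF less.prems(3) BA AB(3) bridge'] .
    moreover have "card (bdry V E ends A) \<ge> 3" "card (bdry V E ends B) \<ge> 3"
      using card_A card_B a b by linarith+
    ultimately obtain P Q where
      P: "partition_on A P" "card P \<le> card (bdry V E ends A) - 2" "\<forall>X\<in>P. conn_linked V E ends 2 X" and
      Q: "partition_on B Q" "card Q \<le> card (bdry V E ends B) - 2" "\<forall>X\<in>Q. conn_linked V E ends 2 X"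
      using less.hyps[of A] less.hyps[of B] by blast
    have "card (P \<union> Q) \<le> card (bdry V E ends S) - 2"
      using card_Un_le[of P Q] P(2) Q(2) card_A card_B a b
        card_bdry_split[where ends = ends, OF assms(1) less.prems(2) AB(1,2)] by linarith
    moreover have "partition_on S (P \<union> Q)"
      using partition_on_Un[OF P(1) Q(1) AB(1)] AB(2) by simp
    ultimately show ?thesis using P(3) Q(3) by blast
  qed
qed

theorem mainTheorem3:
  fixes V :: "'a set" and E :: "'e set" and ends :: "'e \<Rightarrow> 'a \<times> 'a"
    and S T :: "'a set" and k :: nat
  assumes "multigraph V E ends"
    and "V = S \<union> T" and "S \<inter> T = {}"
    and "\<forall>t\<in>T. degree E ends t = 1 \<and> (\<exists>s\<in>S. adjacent E ends t s)"
    and "induced_connected E ends S"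
    and "k = card (bdry V E ends S)" and "k = card T" and "k \<ge> 3"
  shows "\<exists>P. partition_on S P \<and> card P \<le> k - 2 \<and> (\<forall>X\<in>P. conn_linked V E ends 2 X)"
proof -
  have "finite E" "finite S" "S \<subseteq> V"
    using assms(1,2) unfolding multigraph_def by auto
  then show ?thesis
    using cut_connected_partition_conn_linked_2 induced_connected_imp_cut_connected[OF assms(5)]
      assms(6,8) by blast
qed

end
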